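(* There exists a constant $C$ (independent of $N$ and $t$) such that, for the processes $x^t$ and $\overline{x}^t$ described in the context, $$\mathbb{E}\big(|\overline{x}^t-x^t|^2\big)\le C N^{-1}\quad\text{for all } t\ge 0.$$
   Context: Two patches have hosting capacities $N_1=N$ and $N_2=dN$, with $d=N_2/N_1\in(0,1]$ fixed; $\kappa>0$ fixed, $\delta t=1/N$, $\kappa\delta t\le 1$. Let $M=\begin{pmatrix} d & -d\\ -1 & 1\end{pmatrix}$ and $A=\mathrm{Id}-\frac{\kappa}{N}M$. For a function $g$ on $\mathcal D=[0,1]^2$ define $$B_N(g)(x)=\sum_{j_1=0}^{N_1}\sum_{j_2=0}^{N_2}\binom{N_1}{j_1}\binom{N_2}{j_2}x_1^{j_1}(1-x_1)^{N_1-j_1}x_2^{j_2}(1-x_2)^{N_2-j_2}\,g\!\left(\tfrac{j_1}{N_1},\tfrac{j_2}{N_2}\right).$$ $(x^n)_{n\ge0}$ is the Markov chain in $\mathcal D$ with transition kernel $\mathbb{E}(f(x^{n+1})\mid x^n=x)=B_N(f\circ A)(x)$. The càdlàg process is $\overline{x}^t=x^n$ for $n\delta t\le t<(n+1)\delta t$, and $x^t$ is the continuous piecewise linear-in-time process with $x^t=x^n$ at $t=n\delta t$. $|\cdot|$ is the Euclidean norm. *)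

theory Defs
  imports "HOL-Probability.Probability"
begin

text \<open>Two patches, N1 = N, N2 = d N; points of R^2 are pairs (x1, x2), with
  the Euclidean norm (norm on real \<times> real is sqrt (x1^2 + x2^2)).\<close>

definition dom_D :: "(real \<times> real) set" where
  "dom_D = {x. 0 \<le> fst x \<and> fst x \<le> 1 \<and> 0 \<le> snd x \<and> snd x \<le> 1}"

definition dt :: "nat \<Rightarrow> real" where
  "dt N = 1 / real N"

definition Mmat :: "real \<Rightarrow> real \<times> real \<Rightarrow> real \<times> real" where
  "Mmat d y = (d * fst y - d * snd y, - fst y + snd y)"

definition Amap :: "real \<Rightarrow> real \<Rightarrow> nat \<Rightarrow> real \<times> real \<Rightarrow> real \<times> real" where
  "Amap d \<kappa> N y = y - (\<kappa> / real N) *\<^sub>R Mmat d y"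

definition B_N :: "nat \<Rightarrow> nat \<Rightarrow> (real \<times> real \<Rightarrow> real) \<Rightarrow> real \<times> real \<Rightarrow> real" where
  "B_N N1 N2 g x = (\<Sum>j1\<le>N1. \<Sum>j2\<le>N2.
      real (N1 choose j1) * real (N2 choose j2) *
      fst x ^ j1 * (1 - fst x) ^ (N1 - j1) * snd x ^ j2 * (1 - snd x) ^ (N2 - j2) *
      g (real j1 / real N1, real j2 / real N2))"

text \<open>Transition kernel of the chain: x^{n+1} = A (j1/N1, j2/N2) with j1, j2 independent
  binomials B(N1, x1), B(N2, x2); hence E(f(x^{n+1}) | x^n = x) = B_N (f o A) x.\<close>
definition trans_kernel :: "real \<Rightarrow> real \<Rightarrow> nat \<Rightarrow> nat \<Rightarrow> real \<times> real \<Rightarrow> (real \<times> real) pmf" where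
  "trans_kernel d \<kappa> N N2 x =
     map_pmf (\<lambda>(j1, j2). Amap d \<kappa> N (real j1 / real N, real j2 / real N2))
       (pair_pmf (binomial_pmf N (fst x)) (binomial_pmf N2 (snd x)))"

fun chain_path :: "real \<Rightarrow> real \<Rightarrow> nat \<Rightarrow> nat \<Rightarrow> (real \<times> real) pmf \<Rightarrow> nat \<Rightarrow> (real \<times> real) list pmf" where
  "chain_path d \<kappa> N N2 p0 0 = map_pmf (\<lambda>x. [x]) p0"
| "chain_path d \<kappa> N N2 p0 (Suc m) =
     bind_pmf (chain_path d \<kappa> N N2 p0 m)
       (\<lambda>xs. map_pmf (\<lambda>y. xs @ [y]) (trans_kernel d \<kappa> N N2 (last xs)))"

definition step_idx :: "nat \<Rightarrow> real \<Rightarrow> nat" where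
  "step_idx N t = nat \<lfloor>t / dt N\<rfloor>"

definition xbar :: "nat \<Rightarrow> real \<Rightarrow> (real \<times> real) list \<Rightarrow> real \<times> real" where
  "xbar N t xs = xs ! step_idx N t"

definition xlin :: "nat \<Rightarrow> real \<Rightarrow> (real \<times> real) list \<Rightarrow> real \<times> real" where
  "xlin N t xs = (let n = step_idx N t in
      xs ! n + ((t - real n * dt N) / dt N) *\<^sub>R (xs ! (Suc n) - xs ! n))"

end

theory Submission
  imports Defs
begin

text \<open>For \<open>n dt \<le> t < (n + 1) dt\<close> the two processes differ by \<open>frac (t N)\<close> times the
  increment \<open>x\<^sup>n\<^sup>+\<^sup>1 - x\<^sup>n\<close>, so it suffices to bound the second moment of one step of the chain.
  From \<open>x\<close> the chain jumps to \<open>A Y\<close>, where \<open>Y = (j\<^sub>1/N\<^sub>1, j\<^sub>2/N\<^sub>2)\<close> has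
  independent rescaled binomial coordinates, and \<open>A Y - x = (Y - x) - (\<kappa>/N) M Y\<close>. The fluctuation
  \<open>Y - x\<close> has second moment \<open>x\<^sub>1(1 - x\<^sub>1)/N\<^sub>1 + x\<^sub>2(1 - x\<^sub>2)/N\<^sub>2 \<le> (1/N\<^sub>1 + 1/N\<^sub>2)/4\<close>,
  and the drift is \<open>O(\<kappa>/N)\<close> because \<open>M\<close> is bounded on \<open>[0,1]\<^sup>2\<close>, which the chain never
  leaves: each coordinate of \<open>A y\<close> is a convex combination of \<open>y\<^sub>1\<close> and \<open>y\<^sub>2\<close>.\<close>

lemma norm_diff_power2_le:
  fixes a b :: "'a::real_normed_vector"
  shows "(norm (a - b))\<^sup>2 \<le> 2 * (norm a)\<^sup>2 + 2 * (norm b)\<^sup>2"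
proof -
  have "(norm (a - b))\<^sup>2 \<le> (norm a + norm b)\<^sup>2"
    by (simp add: norm_triangle_ineq4 power_mono)
  also have "\<dots> \<le> 2 * (norm a)\<^sup>2 + 2 * (norm b)\<^sup>2"
    using sum_squares_bound[of "norm a" "norm b"] by (simp add: power2_sum)
  finally show ?thesis .
qed

lemma expectation_bind_pmf_le:
  fixes f :: "'b \<Rightarrow> real"
  assumes nonneg: "\<And>y. 0 \<le> f y"
    and integrable: "\<And>x. x \<in> set_pmf M \<Longrightarrow> integrable (measure_pmf (K x)) f"
    and bound: "\<And>x. x \<in> set_pmf M \<Longrightarrow> measure_pmf.expectation (K x) f \<le> c"
    and c_nonneg: "0 \<le> c"
  shows "measure_pmf.expectation (bind_pmf M K) f \<le> c"
proof -
  have "(\<integral>\<^sup>+y. ennreal (f y) \<partial>bind_pmf M K) = (\<integral>\<^sup>+x. \<integral>\<^sup>+y. ennreal (f y) \<partial>K x \<partial>M)"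
    by simp
  also have "\<dots> \<le> (\<integral>\<^sup>+x. ennreal c \<partial>M)"
  proof (rule nn_integral_mono_AE, unfold AE_measure_pmf_iff, intro ballI)
    fix x assume x: "x \<in> set_pmf M"
    have "(\<integral>\<^sup>+y. ennreal (f y) \<partial>K x) = ennreal (measure_pmf.expectation (K x) f)"
      using integrable[OF x] nonneg by (intro nn_integral_eq_integral) auto
    also have "\<dots> \<le> ennreal c"
      using bound[OF x] by (rule ennreal_leI)
    finally show "(\<integral>\<^sup>+y. ennreal (f y) \<partial>K x) \<le> ennreal c" .
  qed
  finally have "(\<integral>\<^sup>+y. ennreal (f y) \<partial>bind_pmf M K) \<le> ennreal c"
    by simp
  then show ?thesis
    using c_nonneg by (simp add: integral_eq_nn_integral nonneg enn2real_leI)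
qed

lemma of_nat_choose_two: "real (k choose 2) = real k * (real k - 1) / 2"
  by (induction k) (simp_all add: numeral_2_eq_2 field_simps)

lemma expectation_binomial_pmf_choose:
  assumes p: "p \<in> {0..1}"
  shows "measure_pmf.expectation (binomial_pmf n p) (\<lambda>k. real (k choose j)) = real (n choose j) * p ^ j"
proof (cases "j \<le> n")
  case False
  then show ?thesis using p by (simp add: expectation_binomial_pmf' binomial_eq_0)
next
  case True
  let ?w = "\<lambda>k. real (n choose k) * p ^ k * (1 - p) ^ (n - k)"
  have "measure_pmf.expectation (binomial_pmf n p) (\<lambda>k. real (k choose j))
      = (\<Sum>k\<in>{j..n}. ?w k * real (k choose j))"
    using p by (simp add: expectation_binomial_pmf') (rule sum.mono_neutral_right; auto)
  also have "\<dots> = (\<Sum>i\<le>n - j. ?w (j + i) * real ((j + i) choose j))"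
    using True by (intro sum.reindex_bij_witness[of _ "\<lambda>i. j + i" "\<lambda>k. k - j"]) auto
  also have "\<dots> = (\<Sum>i\<le>n - j. real (n choose j) * p ^ j *
                      (real (n - j choose i) * p ^ i * (1 - p) ^ (n - j - i)))"
  proof (rule sum.cong[OF refl])
    fix i assume "i \<in> {..n - j}"
    with True have "(n choose (j + i)) * ((j + i) choose j) = (n choose j) * ((n - j) choose i)"
      using choose_mult[of j "j + i" n] by simp
    then show "?w (j + i) * real ((j + i) choose j) = real (n choose j) * p ^ j *
                 (real (n - j choose i) * p ^ i * (1 - p) ^ (n - j - i))"
      by (simp add: power_add algebra_simps flip: of_nat_mult)
  qed
  also have "\<dots> = real (n choose j) * p ^ j"
    using binomial_ring[of p "1 - p" "n - j"] by (simp add: sum_distrib_left[symmetric] atLeast0AtMost)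
  finally show ?thesis .
qed

lemma expectation_binomial_pmf_sq_dev:
  assumes p: "p \<in> {0..1}" and n: "0 < n"
  shows "measure_pmf.expectation (binomial_pmf n p) (\<lambda>k. (real k / real n - p)\<^sup>2) = p * (1 - p) / real n"
proof -
  let ?E = "measure_pmf.expectation (binomial_pmf n p)"
  have mean: "?E real = real n * p"
    using expectation_binomial_pmf_choose[OF p, of n 1] by simp
  have sq: "(real k / real n - p)\<^sup>2
      = (2 * real (k choose 2) + (1 - 2 * p * real n) * real k) / (real n)\<^sup>2 + p\<^sup>2" for k
    using n by (simp add: of_nat_choose_two field_simps power2_eq_square)
  have "?E (\<lambda>k. (real k / real n - p)\<^sup>2)
      = (2 * ?E (\<lambda>k. real (k choose 2)) + (1 - 2 * p * real n) * ?E real) / (real n)\<^sup>2 + p\<^sup>2"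
    unfolding sq using p by simp
  also have "\<dots> = p * (1 - p) / real n"
    unfolding expectation_binomial_pmf_choose[OF p] mean
    using n by (simp add: of_nat_choose_two field_simps power2_eq_square)
  finally show ?thesis .
qed

lemma set_pmf_binomial_subset: "p \<in> {0..1} \<Longrightarrow> set_pmf (binomial_pmf n p) \<subseteq> {..n}"
  by (auto simp: set_pmf_binomial_eq)

lemma dom_D_eq: "dom_D = {0..1} \<times> {0..1}"
  by (auto simp: dom_D_def)

lemma Amap_in_dom_D:
  assumes "0 \<le> d" "d \<le> 1" "0 \<le> \<kappa> / real N" "\<kappa> / real N \<le> 1" "y \<in> dom_D"
  shows "Amap d \<kappa> N y \<in> dom_D"
proof -
  obtain y1 y2 where y: "y = (y1, y2)" "y1 \<in> {0..1}" "y2 \<in> {0..1}"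
    using assms(5) by (auto simp: dom_D_eq)
  let ?e = "\<kappa> / real N"
  have ed: "0 \<le> ?e * d" "?e * d \<le> 1"
    using assms by (intro mult_nonneg_nonneg mult_le_one; simp)+
  have convex_comb: "(1 - a) * u + a * v \<in> {0..1}" if "a \<in> {0..1}" "u \<in> {0..1}" "v \<in> {0..1}" for a u v :: real
    using convexD[OF convex_real_interval(5), of u 0 1 v "1 - a" a] that by simp
  have "(1 - ?e * d) * y1 + (?e * d) * y2 \<in> {0..1}" "(1 - ?e) * y2 + ?e * y1 \<in> {0..1}"
    using assms y ed by (intro convex_comb; simp)+
  moreover have "Amap d \<kappa> N y = ((1 - ?e * d) * y1 + (?e * d) * y2, (1 - ?e) * y2 + ?e * y1)"
    by (simp add: y Amap_def Mmat_def algebra_simps diff_divide_distrib)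
  ultimately show ?thesis by (simp add: dom_D_eq)
qed

lemma norm_Mmat_power2_le:
  assumes "\<bar>d\<bar> \<le> 1" "y \<in> dom_D"
  shows "(norm (Mmat d y))\<^sup>2 \<le> 2"
proof -
  obtain y1 y2 where y: "y = (y1, y2)" "y1 \<in> {0..1}" "y2 \<in> {0..1}"
    using assms(2) by (auto simp: dom_D_eq)
  have "(y1 - y2)\<^sup>2 \<le> 1" "d\<^sup>2 \<le> 1"
    using y assms(1) by (auto simp: abs_square_le_1)
  then have "d\<^sup>2 * (y1 - y2)\<^sup>2 + (y1 - y2)\<^sup>2 \<le> 2"
    using mult_le_one[of "d\<^sup>2" "(y1 - y2)\<^sup>2"] by simp
  then show ?thesis
    by (simp add: y Mmat_def norm_Pair power_mult_distrib power2_commute[of y2 y1]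
        flip: right_diff_distrib)
qed

lemma grid_point_in_dom_D:
  assumes "x \<in> dom_D" "(j1, j2) \<in> set_pmf (pair_pmf (binomial_pmf N (fst x)) (binomial_pmf N2 (snd x)))"
  shows "(real j1 / real N, real j2 / real N2) \<in> dom_D"
  using assms set_pmf_binomial_subset[of "fst x" N] set_pmf_binomial_subset[of "snd x" N2]
  by (fastforce simp: dom_D_eq divide_le_eq_1)

lemma set_pmf_trans_kernel:
  assumes "0 \<le> d" "d \<le> 1" "0 \<le> \<kappa> / real N" "\<kappa> / real N \<le> 1" "x \<in> dom_D"
  shows "set_pmf (trans_kernel d \<kappa> N N2 x) \<subseteq> dom_D"
  using assms grid_point_in_dom_D[OF assms(5)] Amap_in_dom_D
  by (auto simp: trans_kernel_def)

lemma finite_set_pmf_trans_kernel: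
  "x \<in> dom_D \<Longrightarrow> finite (set_pmf (trans_kernel d \<kappa> N N2 x))"
  unfolding trans_kernel_def set_map_pmf set_pair_pmf
  by (intro finite_imageI finite_cartesian_product finite_set_pmf_binomial_pmf) (auto simp: dom_D_eq)

lemma expectation_trans_kernel_increment:
  assumes d: "\<bar>d\<bar> \<le> 1" and N: "0 < N" "0 < N2" and x: "x \<in> dom_D"
  shows "measure_pmf.expectation (trans_kernel d \<kappa> N N2 x) (\<lambda>y. (norm (y - x))\<^sup>2)
           \<le> (1 / real N + 1 / real N2) / 2 + 4 * (\<kappa> / real N)\<^sup>2"
proof -
  obtain x1 x2 where x12: "x = (x1, x2)" and p: "x1 \<in> {0..1}" "x2 \<in> {0..1}"
    using x by (auto simp: dom_D_eq)
  let ?P = "pair_pmf (binomial_pmf N x1) (binomial_pmf N2 x2)"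
  let ?Y = "\<lambda>(j1, j2). (real j1 / real N, real j2 / real N2)"
  let ?e = "\<kappa> / real N"
  let ?dev = "\<lambda>(j1, j2). (real j1 / real N - x1)\<^sup>2 + (real j2 / real N2 - x2)\<^sup>2"
  have finP: "finite (set_pmf ?P)"
    unfolding set_pair_pmf by (intro finite_cartesian_product finite_set_pmf_binomial_pmf p)
  have pointwise: "(norm (Amap d \<kappa> N (?Y z) - x))\<^sup>2 \<le> 2 * ?dev z + 4 * ?e\<^sup>2"
    if "z \<in> set_pmf ?P" for z
  proof -
    have YD: "?Y z \<in> dom_D"
      using grid_point_in_dom_D[of x "fst z" "snd z" N N2] that x x12 by (simp add: case_prod_beta)
    have "(norm (Amap d \<kappa> N (?Y z) - x))\<^sup>2 = (norm ((?Y z - x) - ?e *\<^sub>R Mmat d (?Y z)))\<^sup>2"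
      by (simp add: Amap_def algebra_simps)
    also have "\<dots> \<le> 2 * (norm (?Y z - x))\<^sup>2 + 2 * (?e\<^sup>2 * (norm (Mmat d (?Y z)))\<^sup>2)"
      using norm_diff_power2_le[of "?Y z - x" "?e *\<^sub>R Mmat d (?Y z)"]
      by (simp only: norm_scaleR power_mult_distrib power2_abs)
    also have "\<dots> \<le> 2 * ?dev z + 4 * ?e\<^sup>2"
      using mult_left_mono[OF norm_Mmat_power2_le[OF d YD], of "?e\<^sup>2"]
      by (simp add: x12 norm_Pair case_prod_beta)
    finally show ?thesis .
  qed
  have "measure_pmf.expectation (trans_kernel d \<kappa> N N2 x) (\<lambda>y. (norm (y - x))\<^sup>2)
      = measure_pmf.expectation ?P (\<lambda>z. (norm (Amap d \<kappa> N (?Y z) - x))\<^sup>2)"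
    by (simp add: trans_kernel_def x12 case_prod_beta)
  also have "\<dots> \<le> measure_pmf.expectation ?P (\<lambda>z. 2 * ?dev z + 4 * ?e\<^sup>2)"
    using pointwise finP
    by (intro integral_mono_AE) (auto simp: AE_measure_pmf_iff intro!: integrable_measure_pmf_finite)
  also have "\<dots> = 2 * (x1 * (1 - x1) / real N + x2 * (1 - x2) / real N2) + 4 * ?e\<^sup>2"
    using finP expectation_binomial_pmf_sq_dev[OF p(1) N(1)] expectation_binomial_pmf_sq_dev[OF p(2) N(2)]
    by (simp add: case_prod_beta integrable_measure_pmf_finite
        expectation_pair_pmf_fst[where f = "\<lambda>k. (real k / real N - x1)\<^sup>2"]
        expectation_pair_pmf_snd[where f = "\<lambda>k. (real k / real N2 - x2)\<^sup>2"])
  also have "\<dots> \<le> (1 / real N + 1 / real N2) / 2 + 4 * ?e\<^sup>2"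
  proof -
    have "u * (1 - u) \<le> 1 / 4" for u :: real
      using zero_le_power2[of "u - 1 / 2"] by (simp add: power2_eq_square algebra_simps)
    then have var_le: "u * (1 - u) / real M \<le> (1 / real M) / 4" for u :: real and M :: nat
      using divide_right_mono[of "u * (1 - u)" "1 / 4" "real M"] by simp
    show ?thesis
      using add_mono[OF var_le[of x1 N] var_le[of x2 N2]] by simp
  qed
  finally show ?thesis .
qed

lemma length_chain_path:
  "xs \<in> set_pmf (chain_path d \<kappa> N N2 p0 m) \<Longrightarrow> length xs = Suc m"
  by (induction m arbitrary: xs) auto

lemma set_chain_path_subset_dom_D:
  assumes "0 \<le> d" "d \<le> 1" "0 \<le> \<kappa> / real N" "\<kappa> / real N \<le> 1" "set_pmf p0 \<subseteq> dom_D"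
  shows "xs \<in> set_pmf (chain_path d \<kappa> N N2 p0 m) \<Longrightarrow> set xs \<subseteq> dom_D"
proof (induction m arbitrary: xs)
  case 0
  then show ?case using assms(5) by auto
next
  case (Suc m)
  then obtain ys y where ys: "ys \<in> set_pmf (chain_path d \<kappa> N N2 p0 m)"
    and y: "y \<in> set_pmf (trans_kernel d \<kappa> N N2 (last ys))" and xs: "xs = ys @ [y]"
    by auto
  have "last ys \<in> dom_D"
    using Suc.IH[OF ys] length_chain_path[OF ys] by (cases ys rule: rev_cases) auto
  then have "y \<in> dom_D"
    using set_pmf_trans_kernel[OF assms(1-4)] y by blast
  then show ?case using Suc.IH[OF ys] xs by simp
qed

lemma step_fraction_eq_frac:
  assumes "0 < N" "0 \<le> t"
  shows "(t - real (step_idx N t) * dt N) / dt N = frac (t * real N)"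
  using assms by (simp add: step_idx_def dt_def frac_def field_simps)

lemma norm_xbar_minus_xlin_snoc_le:
  assumes "0 < N" "0 \<le> t" "length xs = Suc (step_idx N t)"
  shows "(norm (xbar N t (xs @ [y]) - xlin N t (xs @ [y])))\<^sup>2 \<le> (norm (y - last xs))\<^sup>2"
proof -
  let ?n = "step_idx N t"
  have "(xs @ [y]) ! ?n = last xs" "(xs @ [y]) ! Suc ?n = y"
    using assms(3) by (cases xs rule: rev_cases; simp add: nth_append)+
  then have "xbar N t (xs @ [y]) - xlin N t (xs @ [y]) = - frac (t * real N) *\<^sub>R (y - last xs)"
    using step_fraction_eq_frac[OF assms(1,2)] by (simp add: xbar_def xlin_def Let_def)
  then have "(norm (xbar N t (xs @ [y]) - xlin N t (xs @ [y])))\<^sup>2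
      = (frac (t * real N))\<^sup>2 * (norm (y - last xs))\<^sup>2"
    by (simp add: power_mult_distrib)
  also have "\<dots> \<le> (norm (y - last xs))\<^sup>2"
    using power_le_one[OF frac_ge_0 less_imp_le[OF frac_lt_1]] by (intro mult_left_le_one_le) auto
  finally show ?thesis .
qed

lemma expectation_interpolation_error_le:
  assumes "0 \<le> d" "d \<le> 1" "0 \<le> \<kappa> / real N" "\<kappa> / real N \<le> 1" "set_pmf p0 \<subseteq> dom_D"
    and "0 < N" "0 \<le> t" "0 \<le> B"
    and increment: "\<And>x. x \<in> dom_D \<Longrightarrow>
          measure_pmf.expectation (trans_kernel d \<kappa> N N2 x) (\<lambda>y. (norm (y - x))\<^sup>2) \<le> B"
  shows "measure_pmf.expectation (chain_path d \<kappa> N N2 p0 (Suc (step_idx N t)))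
           (\<lambda>xs. (norm (xbar N t xs - xlin N t xs))\<^sup>2) \<le> B"
proof -
  let ?n = "step_idx N t" and ?K = "trans_kernel d \<kappa> N N2"
  let ?err = "\<lambda>xs. (norm (xbar N t xs - xlin N t xs))\<^sup>2"
  have "measure_pmf.expectation (chain_path d \<kappa> N N2 p0 (Suc ?n)) ?err
      = measure_pmf.expectation
          (bind_pmf (chain_path d \<kappa> N N2 p0 ?n) (\<lambda>xs. map_pmf (\<lambda>y. xs @ [y]) (?K (last xs)))) ?err"
    by simp
  also have "\<dots> \<le> B"
  proof (rule expectation_bind_pmf_le)
    fix xs assume xs: "xs \<in> set_pmf (chain_path d \<kappa> N N2 p0 ?n)"
    then have len: "length xs = Suc ?n"
      by (rule length_chain_path)
    moreover have "last xs \<in> dom_D"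
      using set_chain_path_subset_dom_D[OF assms(1-5) xs] len by (cases xs rule: rev_cases) auto
    ultimately have fin: "finite (set_pmf (?K (last xs)))"
      by (simp add: finite_set_pmf_trans_kernel)
    then show "integrable (map_pmf (\<lambda>y. xs @ [y]) (?K (last xs))) ?err"
      by (intro integrable_measure_pmf_finite) simp
    have "measure_pmf.expectation (map_pmf (\<lambda>y. xs @ [y]) (?K (last xs))) ?err
        \<le> measure_pmf.expectation (?K (last xs)) (\<lambda>y. (norm (y - last xs))\<^sup>2)"
      using fin norm_xbar_minus_xlin_snoc_le[OF assms(6,7) len]
      by (auto intro!: integral_mono integrable_measure_pmf_finite)
    also have "\<dots> \<le> B"
      using increment \<open>last xs \<in> dom_D\<close> .
    finally show "measure_pmf.expectation (map_pmf (\<lambda>y. xs @ [y]) (?K (last xs))) ?err \<le> B" .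
  qed (use \<open>0 \<le> B\<close> in auto)
  finally show ?thesis .
qed

theorem corollary1:
  fixes d \<kappa> :: real
  assumes "0 < d" and "d \<le> 1" and "0 < \<kappa>"
  shows "\<exists>C. \<forall>(N::nat) (N2::nat) (p0 :: (real \<times> real) pmf) (t::real).
           0 < N \<and> real N2 = d * real N \<and> \<kappa> * dt N \<le> 1 \<and> set_pmf p0 \<subseteq> dom_D \<and> 0 \<le> t \<longrightarrow>
           measure_pmf.expectation (chain_path d \<kappa> N N2 p0 (Suc (step_idx N t)))
             (\<lambda>xs. (norm (xbar N t xs - xlin N t xs))\<^sup>2) \<le> C / real N"
proof (intro exI allI impI, elim conjE)
  fix N N2 :: nat and p0 :: "(real \<times> real) pmf" and t :: real
  assume N: "0 < N" and N2: "real N2 = d * real N" and step: "\<kappa> * dt N \<le> 1"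
    and p0: "set_pmf p0 \<subseteq> dom_D" and t: "0 \<le> t"
  let ?e = "\<kappa> / real N" and ?C = "(1 + 1 / d) / 2 + 4 * \<kappa>"
  have e: "0 \<le> ?e" "?e \<le> 1"
    using assms step by (simp_all add: dt_def)
  have "0 < real N2"
    using assms N N2 by simp
  have "(1 / real N + 1 / real N2) / 2 + 4 * ?e\<^sup>2 \<le> (1 / real N + 1 / real N2) / 2 + 4 * ?e"
    using mult_left_le[OF e(2) e(1)] by (simp add: power2_eq_square)
  also have "\<dots> = ?C / real N"
    using assms N N2 by (simp add: field_simps)
  finally have "measure_pmf.expectation (trans_kernel d \<kappa> N N2 x) (\<lambda>y. (norm (y - x))\<^sup>2) \<le> ?C / real N"
    if "x \<in> dom_D" for x
    using expectation_trans_kernel_increment[of d N N2 x \<kappa>] assms N \<open>0 < real N2\<close> that by simp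
  then show "measure_pmf.expectation (chain_path d \<kappa> N N2 p0 (Suc (step_idx N t)))
             (\<lambda>xs. (norm (xbar N t xs - xlin N t xs))\<^sup>2) \<le> ?C / real N"
    using assms e p0 N t by (intro expectation_interpolation_error_le) auto
qed

end
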